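(* Let $\mathcal{N}=\{1,\dots,n\}$ be a finite set of agents, $\mathcal{S}$ a finite global state space and $\mathcal{A}=\prod_{i\in\mathcal{N}}\mathcal{A}_i$ a finite joint action space, where each global state $\mathbf{s}$ determines local states $s_i$ and each joint action is $\mathbf{a}=(a_1,\dots,a_n)$. Let $\alpha\ge0$, $\gamma\in[0,1)$, let $\phi^*_0,\phi^*_1,\dots,\phi^*_n\in\mathbb{R}$, and for each $i$ let $\nu^*_i(s_i)$ and $q^*_i(s_i,a_i)$ be real-valued local value and $Q$-functions. Suppose the weight function is $$w^{\text{tot}}_{\boldsymbol{\nu}^*}(\mathbf{s},\mathbf{a})=e^{-1}\exp\Big(\frac{1}{1+\alpha}\Big(\sum_{i\in\mathcal{N}}\phi^*_i\big(q^*_i(s_i,a_i)-\nu^*_i(s_i)\big)+\gamma\phi^*_0\Big)\Big).$$ Let $\rho^U_{\text{tot}}(\mathbf{s},\mathbf{a})=d^U(\mathbf{s})\,\mu^U(\mathbf{a}\mid\mathbf{s})$ be the state-action distribution of the union dataset, with joint behavior policy $\mu^U$, and assume $\mu^U$ is decomposable into local behavior policies: $\mu^U(\mathbf{a}\mid\mathbf{s})=\prod_{i\in\mathcal{N}}\mu^U_i(a_i\mid s_i)$. Let $\pi_i^*$ be an optimal solution to the local weighted behavior cloning objective $$\max_{\pi_i}\ \mathbb{E}_{(\mathbf{s},\mathbf{a})\sim\rho^U_{\text{tot}}}\big[w^{\text{tot}}_{\boldsymbol{\nu}^*}(\mathbf{s},\mathbf{a})\log\pi_i(a_i\mid s_i)\big].$$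 Then $$\pi^*_i(a_i\mid s_i)=\frac{1}{\Delta(s_i)}\exp\Big(\frac{\phi^*_i}{1+\alpha}\,q^*_i(s_i,a_i)+\log\mu^U_i(a_i\mid s_i)\Big),\quad \Delta(s_i)=\sum_{a_i\in\mathcal{A}_i}\exp\Big(\frac{\phi^*_i}{1+\alpha}\,q^*_i(s_i,a_i)+\log\mu^U_i(a_i\mid s_i)\Big).$$
   Context: In the paper, $\boldsymbol{\nu}^*=\{\nu^*_i\}$ and $\phi^*$ are optimal parameters of a linear mixing $\nu^{\text{tot}*}(\mathbf{s})=\sum_i\phi^*_i\nu^*_i(s_i)+\phi^*_0$ of local value functions; the reward $r(\mathbf{s},\mathbf{a})=\log(\rho^E_{\text{tot}}/\rho^U_{\text{tot}})$ is assumed to decompose as $\sum_i\phi^*_i r_i(s_i,a_i)+\phi^*_0$; and $q^*_i(s_i,a_i)=r_i(s_i,a_i)+\gamma\,\mathbb{E}_{s_i'\mid s_i,a_i}[\nu^*_i(s_i')]$. Under these assumptions the weight $w^{\text{tot}}_{\boldsymbol{\nu}^*}=\exp(A^{\text{tot}}_{\boldsymbol{\nu}^*}/(1+\alpha)-1)$ takes the displayed decomposed form, which is what the statement uses. $\Delta(s_i)$ is the normalization constant. *)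

theory Defs
  imports Complex_Main "HOL-Library.FuncSet"
begin

text \<open>A local policy of an agent with local action set A: for every local state
  it is a strictly positive probability distribution over A (strict positivity
  is needed so that log pi is finite, as the objective uses log pi).\<close>
definition local_policy :: "'a set \<Rightarrow> ('l \<Rightarrow> 'a \<Rightarrow> real) \<Rightarrow> bool" where
  "local_policy A p \<longleftrightarrow> (\<forall>sl. (\<forall>b\<in>A. p sl b > 0) \<and> (\<Sum>b\<in>A. p sl b) = 1)"

abbreviation joint_actions :: "nat \<Rightarrow> (nat \<Rightarrow> 'a set) \<Rightarrow> (nat \<Rightarrow> 'a) set" where
  "joint_actions n A \<equiv> PiE {1..n} A"

definition wbc_objective ::
  "nat \<Rightarrow> 's set \<Rightarrow> (nat \<Rightarrow> 'a set) \<Rightarrow> (nat \<Rightarrow> 's \<Rightarrow> 'l) \<Rightarrow> ('s \<Rightarrow> (nat \<Rightarrow> 'a) \<Rightarrow> real)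
   \<Rightarrow> ('s \<Rightarrow> (nat \<Rightarrow> 'a) \<Rightarrow> real) \<Rightarrow> nat \<Rightarrow> ('l \<Rightarrow> 'a \<Rightarrow> real) \<Rightarrow> real" where
  "wbc_objective n S A loc rhoU w i p =
     (\<Sum>s\<in>S. \<Sum>a\<in>joint_actions n A. rhoU s a * w s a * ln (p (loc i s) (a i)))"

end

(* Since the behaviour policy and the weight both factorise over the agents, summing the
   other agents' actions out of the objective leaves, for agent i, a sum over global states s
   of  K(s) f(s_i, a_i) log pi(a_i | s_i)  with K(s) >= 0 and
   f(l, .) = exp (phi_i q_i(l, .) / (1 + alpha)) mu_i(. | l).
   Redefining pi at one local state l shows that pi(. | l) maximises  sum_b W(b) log p(b)  over
   distributions p, where W is f(l, .) times the pooled constant of the states observed as l;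
   that constant is positive because the state s with d^U(s) > 0 contributes to it.
   By the equality case of Gibbs' inequality the maximiser is W normalised, i.e. f(l, .) / Delta(l). *)
theory Submission
  imports Defs
begin

lemma sum_PiE_prod_times_component:
  fixes h :: "'i \<Rightarrow> 'a \<Rightarrow> 'b::comm_semiring_1"
  assumes "finite I" "i \<in> I" "\<forall>j\<in>I. finite (B j)"
  shows "(\<Sum>a\<in>PiE I B. (\<Prod>j\<in>I. h j (a j)) * D (a i)) =
     (\<Sum>x\<in>B i. h i x * D x) * (\<Prod>j\<in>I-{i}. \<Sum>x\<in>B j. h j x)"
proof -
  define h' where "h' j x = (if j = i then h j x * D x else h j x)" for j x
  have off_i: "(\<Prod>j\<in>I-{i}. h' j (y j)) = (\<Prod>j\<in>I-{i}. h j (y j))" for y :: "'i \<Rightarrow> 'a"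
    by (rule prod.cong) (auto simp: h'_def)
  have "(\<Sum>a\<in>PiE I B. (\<Prod>j\<in>I. h j (a j)) * D (a i)) = (\<Sum>a\<in>PiE I B. \<Prod>j\<in>I. h' j (a j))"
    using assms by (simp add: prod.remove off_i h'_def mult_ac)
  also have "\<dots> = (\<Prod>j\<in>I. \<Sum>x\<in>B j. h' j x)"
    using assms by (simp add: prod_sum_PiE)
  also have "\<dots> = (\<Sum>x\<in>B i. h i x * D x) * (\<Prod>j\<in>I-{i}. \<Sum>x\<in>B j. h j x)"
    using assms by (simp add: prod.remove h'_def)
  finally show ?thesis .
qed

lemma mult_exp_diff_eq:
  fixes m t x y d :: real
  assumes "m > 0"
  shows "m * exp (t * (x - y) / d) = exp (- (t * y / d)) * exp (t * x / d + ln m)"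
  using assms by (simp add: exp_add mult_exp_exp right_diff_distrib diff_divide_distrib)

lemma gibbs_term_nonneg:
  fixes x y :: real
  assumes "x > 0" "y > 0"
  shows "y * (ln x - ln y) \<le> x - y"
  using ln_diff_le[OF assms] assms by (simp add: field_simps)

lemma gibbs_term_eq_imp_eq:
  fixes x y :: real
  assumes "x > 0" "y > 0" "y * (ln x - ln y) = x - y"
  shows "x = y"
proof -
  have "ln (x / y) = x / y - 1"
    using assms by (simp add: ln_div field_simps)
  then have "x / y = 1"
    using assms by (intro ln_eq_minus_one) auto
  then show ?thesis
    using assms by simp
qed

lemma gibbs_equality:
  fixes g p :: "'a \<Rightarrow> real"
  assumes "finite A" "\<forall>b\<in>A. g b > 0" "\<forall>b\<in>A. p b > 0" "sum p A \<le> sum g A"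
    and "(\<Sum>b\<in>A. g b * ln (g b)) \<le> (\<Sum>b\<in>A. g b * ln (p b))"
  shows "\<forall>b\<in>A. p b = g b"
proof -
  define t where "t b = p b - g b - g b * (ln (p b) - ln (g b))" for b
  have t_nonneg: "\<forall>b\<in>A. t b \<ge> 0"
    using assms(2,3) gibbs_term_nonneg by (simp add: t_def)
  have "(\<Sum>b\<in>A. t b) = sum p A - sum g A - ((\<Sum>b\<in>A. g b * ln (p b)) - (\<Sum>b\<in>A. g b * ln (g b)))"
    by (simp add: t_def sum_subtractf right_diff_distrib)
  also have "\<dots> \<le> 0"
    using assms(4,5) by simp
  finally have "\<forall>b\<in>A. t b = 0"
    using t_nonneg sum_nonneg_eq_0_iff[OF assms(1)] sum_nonneg[of A t] by (metis order_antisym)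
  then show ?thesis
    using assms(2,3) gibbs_term_eq_imp_eq by (simp add: t_def)
qed

lemma weighted_log_maximiser:
  fixes c p :: "'a \<Rightarrow> real"
  assumes "finite A" "\<forall>b\<in>A. c b > 0" "\<forall>b\<in>A. p b > 0" "sum p A \<le> 1"
    and "(\<Sum>b\<in>A. c b * ln (c b / sum c A)) \<le> (\<Sum>b\<in>A. c b * ln (p b))"
  shows "\<forall>b\<in>A. p b = c b / sum c A"
proof (cases "A = {}")
  case False
  define C where "C = sum c A"
  have C_pos: "C > 0"
    using assms(1,2) False by (simp add: C_def sum_pos)
  have normalise: "(\<Sum>b\<in>A. c b / C * F b) = (\<Sum>b\<in>A. c b * F b) / C" for F :: "'a \<Rightarrow> real"
    by (simp add: sum_divide_distrib)
  have "(\<Sum>b\<in>A. c b / C * ln (c b / C)) \<le> (\<Sum>b\<in>A. c b / C * ln (p b))"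
    unfolding normalise using assms(5) C_pos by (simp add: C_def divide_right_mono)
  moreover have "sum p A \<le> (\<Sum>b\<in>A. c b / C)"
    using assms(4) C_pos by (simp add: C_def sum_divide_distrib[symmetric])
  ultimately show ?thesis
    using gibbs_equality[of A "\<lambda>b. c b / C" p] assms(1-3) C_pos by (simp add: C_def)
qed simp

text \<open>Redefining the policy at the single local state l changes the objective only
  through the states observed as l.\<close>
lemma local_policy_optimal_at_state:
  fixes V :: "'x \<Rightarrow> 'a \<Rightarrow> real" and L :: "'x \<Rightarrow> 'l"
    and \<pi> :: "'l \<Rightarrow> 'a \<Rightarrow> real" and p :: "'a \<Rightarrow> real"
  assumes "finite X" "local_policy A \<pi>"
    and opt: "\<forall>p. local_policy A p \<longrightarrow>
      (\<Sum>x\<in>X. \<Sum>b\<in>A. V x b * ln (p (L x) b)) \<le> (\<Sum>x\<in>X. \<Sum>b\<in>A. V x b * ln (\<pi> (L x) b))"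
    and "\<forall>b\<in>A. p b > 0" "sum p A = 1"
  shows "(\<Sum>b\<in>A. (\<Sum>x\<in>{x\<in>X. L x = l}. V x b) * ln (p b))
    \<le> (\<Sum>b\<in>A. (\<Sum>x\<in>{x\<in>X. L x = l}. V x b) * ln (\<pi> l b))"
proof -
  define \<pi>' where "\<pi>' = \<pi>(l := p)"
  have "local_policy A \<pi>'"
    using assms(2,4,5) by (simp add: local_policy_def \<pi>'_def)
  then have "0 \<le> (\<Sum>x\<in>X. \<Sum>b\<in>A. V x b * ln (\<pi> (L x) b)) - (\<Sum>x\<in>X. \<Sum>b\<in>A. V x b * ln (\<pi>' (L x) b))"
    using opt by simp
  also have "\<dots> = (\<Sum>x\<in>X. if L x = l then \<Sum>b\<in>A. V x b * (ln (\<pi> l b) - ln (p b)) else 0)"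
    unfolding sum_subtractf[symmetric]
    by (intro sum.cong refl) (simp add: \<pi>'_def sum_subtractf right_diff_distrib)
  also have "\<dots> = (\<Sum>b\<in>A. (\<Sum>x\<in>{x\<in>X. L x = l}. V x b) * (ln (\<pi> l b) - ln (p b)))"
    using assms(1) by (simp add: sum.inter_filter[symmetric] sum_distrib_right sum.swap[of _ A])
  finally show ?thesis
    by (simp add: right_diff_distrib sum_subtractf)
qed

lemma wbc_objective_product_form:
  fixes E :: "'s \<Rightarrow> real" and h :: "'s \<Rightarrow> nat \<Rightarrow> 'a \<Rightarrow> real"
  assumes "i \<in> {1..n}" "\<forall>j\<in>{1..n}. finite (A j)"
    and product: "\<forall>s\<in>S. \<forall>a\<in>joint_actions n A.
      rhoU s a * w s a = E s * (\<Prod>j\<in>{1..n}. h s j (a j))"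
  shows "wbc_objective n S A loc rhoU w i p =
    (\<Sum>s\<in>S. \<Sum>b\<in>A i. E s * (\<Prod>j\<in>{1..n}-{i}. \<Sum>x\<in>A j. h s j x) * h s i b * ln (p (loc i s) b))"
  unfolding wbc_objective_def
proof (rule sum.cong)
  fix s assume "s \<in> S"
  then have "(\<Sum>a\<in>joint_actions n A. rhoU s a * w s a * ln (p (loc i s) (a i)))
      = E s * (\<Sum>a\<in>joint_actions n A. (\<Prod>j\<in>{1..n}. h s j (a j)) * ln (p (loc i s) (a i)))"
    using product by (simp add: sum_distrib_left mult.assoc)
  also have "\<dots> = E s * ((\<Sum>b\<in>A i. h s i b * ln (p (loc i s) b)) * (\<Prod>j\<in>{1..n}-{i}. \<Sum>x\<in>A j. h s j x))"
    using sum_PiE_prod_times_component[of "{1..n}" i A "h s" "\<lambda>b. ln (p (loc i s) b)"] assms(1,2)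
    by simp
  finally show "(\<Sum>a\<in>joint_actions n A. rhoU s a * w s a * ln (p (loc i s) (a i)))
      = (\<Sum>b\<in>A i. E s * (\<Prod>j\<in>{1..n}-{i}. \<Sum>x\<in>A j. h s j x) * h s i b * ln (p (loc i s) b))"
    by (simp add: sum_distrib_left sum_distrib_right mult_ac)
qed simp

lemma wbc_optimal_policy_of_product_weights:
  fixes E k :: "'s \<Rightarrow> real" and h :: "'s \<Rightarrow> nat \<Rightarrow> 'a \<Rightarrow> real" and f :: "'a \<Rightarrow> real"
  assumes "finite S" and finA: "\<forall>j\<in>{1..n}. finite (A j) \<and> A j \<noteq> {}" and agent: "i \<in> {1..n}"
    and product: "\<forall>s'\<in>S. \<forall>a\<in>joint_actions n A.
      rhoU s' a * w s' a = E s' * (\<Prod>j\<in>{1..n}. h s' j (a j))"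
    and E_nonneg: "\<forall>s'\<in>S. E s' \<ge> 0"
    and h_pos: "\<forall>s'. \<forall>j\<in>{1..n}. \<forall>x\<in>A j. h s' j x > 0"
    and agent_factor: "\<forall>s'\<in>S. loc i s' = loc i s \<longrightarrow> k s' > 0 \<and> (\<forall>b\<in>A i. h s' i b = k s' * f b)"
    and f_pos: "\<forall>b\<in>A i. f b > 0"
    and pi_feasible: "local_policy (A i) \<pi>"
    and pi_opt: "\<forall>p. local_policy (A i) p \<longrightarrow>
      wbc_objective n S A loc rhoU w i p \<le> wbc_objective n S A loc rhoU w i \<pi>"
    and s_in: "s \<in> S" and E_s: "E s > 0" and ai_in: "ai \<in> A i"
  shows "\<pi> (loc i s) ai = f ai / sum f (A i)"
proof -
  define R where "R s' = (\<Prod>j\<in>{1..n}-{i}. \<Sum>x\<in>A j. h s' j x)" for s'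
  define V where "V s' b = E s' * R s' * h s' i b" for s' b
  define T where "T = {s'\<in>S. loc i s' = loc i s}"
  define W where "W b = (\<Sum>s'\<in>T. V s' b)" for b
  define K where "K = (\<Sum>s'\<in>T. E s' * R s' * k s')"
  have finAi: "finite (A i)" "A i \<noteq> {}"
    using finA agent by auto
  have R_pos: "R s' > 0" for s'
    unfolding R_def using finA h_pos by (intro prod_pos sum_pos) auto
  have "K > 0"
    unfolding K_def T_def using assms(1) s_in E_s E_nonneg agent_factor R_pos
    by (intro sum_pos2[of _ s])
      (auto intro!: mult_nonneg_nonneg less_imp_le[of 0 "R _"] less_imp_le[of 0 "k _"])
  have W_eq: "W b = K * f b" if "b \<in> A i" for b
    unfolding W_def K_def V_def sum_distrib_right T_def
    using agent_factor that by (intro sum.cong) (auto simp: mult_ac)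
  have W_pos: "\<forall>b\<in>A i. W b > 0"
    using W_eq \<open>K > 0\<close> f_pos by simp
  have obj: "wbc_objective n S A loc rhoU w i p = (\<Sum>s'\<in>S. \<Sum>b\<in>A i. V s' b * ln (p (loc i s') b))" for p
    unfolding V_def R_def using wbc_objective_product_form[OF agent _ product] finA by simp
  have "(\<Sum>b\<in>A i. W b * ln (W b / sum W (A i))) \<le> (\<Sum>b\<in>A i. W b * ln (\<pi> (loc i s) b))"
    using local_policy_optimal_at_state[OF assms(1) pi_feasible, of V "loc i" "\<lambda>b. W b / sum W (A i)"]
      pi_opt W_pos finAi sum_pos[of "A i" W]
    by (simp add: obj W_def T_def sum_divide_distrib[symmetric])
  then have "\<pi> (loc i s) ai = W ai / sum W (A i)"
    using weighted_log_maximiser[OF finAi(1) W_pos] pi_feasible ai_in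
    by (simp add: local_policy_def)
  also have "\<dots> = f ai / sum f (A i)"
    using W_eq ai_in \<open>K > 0\<close> by (simp add: sum_distrib_left[symmetric] cong: sum.cong)
  finally show ?thesis .
qed

theorem proposition5:
  fixes n :: nat and S :: "'s set" and loc :: "nat \<Rightarrow> 's \<Rightarrow> 'l"
    and A :: "nat \<Rightarrow> 'a set"
    and \<alpha> \<gamma> :: real and \<phi> :: "nat \<Rightarrow> real"
    and \<nu> :: "nat \<Rightarrow> 'l \<Rightarrow> real" and q :: "nat \<Rightarrow> 'l \<Rightarrow> 'a \<Rightarrow> real"
    and w :: "'s \<Rightarrow> (nat \<Rightarrow> 'a) \<Rightarrow> real"
    and dU :: "'s \<Rightarrow> real" and muU :: "'s \<Rightarrow> (nat \<Rightarrow> 'a) \<Rightarrow> real"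
    and rhoU :: "'s \<Rightarrow> (nat \<Rightarrow> 'a) \<Rightarrow> real"
    and mu :: "nat \<Rightarrow> 'l \<Rightarrow> 'a \<Rightarrow> real"
    and i :: nat and \<pi> :: "'l \<Rightarrow> 'a \<Rightarrow> real"
    and s :: 's and ai :: 'a
  assumes finS: "finite S"
    and finA: "\<forall>j\<in>{1..n}. finite (A j) \<and> A j \<noteq> {}"
    and alpha: "\<alpha> \<ge> 0"
    and gamma: "0 \<le> \<gamma>" "\<gamma> < 1"
    and w_form: "\<forall>s'\<in>S. \<forall>a\<in>joint_actions n A.
        w s' a = exp (-1) * exp ((1 / (1 + \<alpha>)) *
          ((\<Sum>j\<in>{1..n}. \<phi> j * (q j (loc j s') (a j) - \<nu> j (loc j s'))) + \<gamma> * \<phi> 0))"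
    and dU_dist: "\<forall>s'\<in>S. dU s' \<ge> 0" "(\<Sum>s'\<in>S. dU s') = 1"
    and rhoU_def: "\<forall>s'\<in>S. \<forall>a\<in>joint_actions n A. rhoU s' a = dU s' * muU s' a"
    and muU_dec: "\<forall>s'\<in>S. \<forall>a\<in>joint_actions n A.
        muU s' a = (\<Prod>j\<in>{1..n}. mu j (loc j s') (a j))"
    and mu_local: "\<forall>j\<in>{1..n}. local_policy (A j) (mu j)"
    and agent: "i \<in> {1..n}"
    and pi_feasible: "local_policy (A i) \<pi>"
    and pi_opt: "\<forall>p. local_policy (A i) p \<longrightarrow>
        wbc_objective n S A loc rhoU w i p \<le> wbc_objective n S A loc rhoU w i \<pi>"
    and s_supp: "s \<in> S" "dU s > 0"
    and ai_in: "ai \<in> A i"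
  shows "\<pi> (loc i s) ai =
     exp (\<phi> i / (1 + \<alpha>) * q i (loc i s) ai + ln (mu i (loc i s) ai)) /
     (\<Sum>b\<in>A i. exp (\<phi> i / (1 + \<alpha>) * q i (loc i s) b + ln (mu i (loc i s) b)))"
proof -
  define h where "h s' j x = mu j (loc j s') x * exp (\<phi> j / (1 + \<alpha>) * (q j (loc j s') x - \<nu> j (loc j s')))"
    for s' j x
  define E where "E s' = dU s' * exp (-1) * exp (\<gamma> * \<phi> 0 / (1 + \<alpha>))" for s'
  define k where "k s' = exp (- (\<phi> i / (1 + \<alpha>) * \<nu> i (loc i s')))" for s'
  have mu_pos: "\<forall>s'. \<forall>j\<in>{1..n}. \<forall>x\<in>A j. mu j s' x > 0"
    using mu_local by (simp add: local_policy_def)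
  have product: "\<forall>s'\<in>S. \<forall>a\<in>joint_actions n A.
      rhoU s' a * w s' a = E s' * (\<Prod>j\<in>{1..n}. h s' j (a j))"
    using rhoU_def muU_dec w_form
    by (simp add: h_def E_def prod.distrib exp_sum[symmetric] sum_distrib_left
        distrib_left exp_add mult_ac)
  have agent_factor: "\<forall>s'\<in>S. loc i s' = loc i s \<longrightarrow> k s' > 0 \<and> (\<forall>b\<in>A i.
      h s' i b = k s' * exp (\<phi> i / (1 + \<alpha>) * q i (loc i s) b + ln (mu i (loc i s) b)))"
    using mu_pos agent by (simp add: h_def k_def mult_exp_diff_eq)
  show ?thesis
    using wbc_optimal_policy_of_product_weights[OF finS finA agent product _ _ agent_factor _
        pi_feasible pi_opt s_supp(1) _ ai_in] mu_pos agent s_supp(2) dU_dist(1)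
    by (simp add: E_def h_def)
qed

end
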